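(* Let $G$ be a residually finite group acting (on the right) primitively on an infinite set $X$, $(x,g)\mapsto x\cdot g$. Let $M=\{1\}\cup G\cup X\cup\{0\}$ be the monoid with identity $1$ and zero $0$, with multiplication extending that of $G$ and given by $xg=x\cdot g$, $gx=0$, $xy=0$ for $g\in G$, $x,y\in X$. Then $I=X\cup\{0\}$ is an ideal of $M$ which is residually finite (as a semigroup), the Rees quotient $M/I$ is residually finite, but $M$ is not residually finite.
   Context: For an ideal $I$ of a monoid $M$, the Rees quotient $M/I$ is the quotient by the congruence $\Delta_M\cup(I\times I)$, where $\Delta_M=\{(x,x):x\in M\}$. A semigroup/monoid is residually finite if distinct elements are separated by homomorphisms to finite semigroups/monoids. A group action on $X$ is primitive if it is transitive and the only $G$-invariant partitions of $X$ are the trivial ones. *)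

theory Defs
  imports "HOL-Algebra.Group" "HOL-Library.Disjoint_Sets"
begin

definition semigroup_str :: "('a, 'b) monoid_scheme \<Rightarrow> bool" where
  "semigroup_str S \<longleftrightarrow>
     (\<forall>x\<in>carrier S. \<forall>y\<in>carrier S. x \<otimes>\<^bsub>S\<^esub> y \<in> carrier S) \<and>
     (\<forall>x\<in>carrier S. \<forall>y\<in>carrier S. \<forall>z\<in>carrier S.
        (x \<otimes>\<^bsub>S\<^esub> y) \<otimes>\<^bsub>S\<^esub> z = x \<otimes>\<^bsub>S\<^esub> (y \<otimes>\<^bsub>S\<^esub> z))"

(* Residual finiteness.  Every finite semigroup/monoid/group is isomorphic to one
   whose carrier is a set of naturals, so finite targets are taken with carrier in nat. *)
definition residually_finite_semigroup :: "('a, 'b) monoid_scheme \<Rightarrow> bool" where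
  "residually_finite_semigroup S \<longleftrightarrow>
     (\<forall>x\<in>carrier S. \<forall>y\<in>carrier S. x \<noteq> y \<longrightarrow>
        (\<exists>(N :: nat monoid) h. semigroup_str N \<and> finite (carrier N) \<and>
            h \<in> hom S N \<and> h x \<noteq> h y))"

definition residually_finite_monoid :: "('a, 'b) monoid_scheme \<Rightarrow> bool" where
  "residually_finite_monoid S \<longleftrightarrow>
     (\<forall>x\<in>carrier S. \<forall>y\<in>carrier S. x \<noteq> y \<longrightarrow>
        (\<exists>(N :: nat monoid) h. monoid N \<and> finite (carrier N) \<and>
            h \<in> hom S N \<and> h \<one>\<^bsub>S\<^esub> = \<one>\<^bsub>N\<^esub> \<and> h x \<noteq> h y))"

definition residually_finite_group :: "('a, 'b) monoid_scheme \<Rightarrow> bool" where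
  "residually_finite_group G \<longleftrightarrow>
     (\<forall>x\<in>carrier G. \<forall>y\<in>carrier G. x \<noteq> y \<longrightarrow>
        (\<exists>(N :: nat monoid) h. group N \<and> finite (carrier N) \<and>
            h \<in> hom G N \<and> h x \<noteq> h y))"

definition right_action :: "('g, 'b) monoid_scheme \<Rightarrow> 'x set \<Rightarrow> ('x \<Rightarrow> 'g \<Rightarrow> 'x) \<Rightarrow> bool" where
  "right_action G X act \<longleftrightarrow>
     (\<forall>x\<in>X. \<forall>g\<in>carrier G. act x g \<in> X) \<and>
     (\<forall>x\<in>X. act x \<one>\<^bsub>G\<^esub> = x) \<and>
     (\<forall>x\<in>X. \<forall>g\<in>carrier G. \<forall>h\<in>carrier G. act (act x g) h = act x (g \<otimes>\<^bsub>G\<^esub> h))"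

definition transitive_action :: "('g, 'b) monoid_scheme \<Rightarrow> 'x set \<Rightarrow> ('x \<Rightarrow> 'g \<Rightarrow> 'x) \<Rightarrow> bool" where
  "transitive_action G X act \<longleftrightarrow> X \<noteq> {} \<and> (\<forall>x\<in>X. \<forall>y\<in>X. \<exists>g\<in>carrier G. act x g = y)"

definition invariant_partition :: "('g, 'b) monoid_scheme \<Rightarrow> 'x set \<Rightarrow> ('x \<Rightarrow> 'g \<Rightarrow> 'x) \<Rightarrow> 'x set set \<Rightarrow> bool" where
  "invariant_partition G X act P \<longleftrightarrow>
     partition_on X P \<and> (\<forall>B\<in>P. \<forall>g\<in>carrier G. (\<lambda>x. act x g) ` B \<in> P)"

definition primitive_action :: "('g, 'b) monoid_scheme \<Rightarrow> 'x set \<Rightarrow> ('x \<Rightarrow> 'g \<Rightarrow> 'x) \<Rightarrow> bool" where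
  "primitive_action G X act \<longleftrightarrow>
     right_action G X act \<and> transitive_action G X act \<and>
     (\<forall>P. invariant_partition G X act P \<longrightarrow> P = {X} \<or> P = (\<lambda>x. {x}) ` X)"

definition monoid_ideal :: "('a, 'b) monoid_scheme \<Rightarrow> 'a set \<Rightarrow> bool" where
  "monoid_ideal M I \<longleftrightarrow> I \<noteq> {} \<and> I \<subseteq> carrier M \<and>
     (\<forall>m\<in>carrier M. \<forall>i\<in>I. m \<otimes>\<^bsub>M\<^esub> i \<in> I \<and> i \<otimes>\<^bsub>M\<^esub> m \<in> I)"

definition sub_semigroup :: "('a, 'b) monoid_scheme \<Rightarrow> 'a set \<Rightarrow> 'a monoid" where
  "sub_semigroup M I = \<lparr>carrier = I, mult = mult M, one = one M\<rparr>"

definition rees_cong :: "('a, 'b) monoid_scheme \<Rightarrow> 'a set \<Rightarrow> ('a \<times> 'a) set" where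
  "rees_cong M I = Id_on (carrier M) \<union> (I \<times> I)"

definition rees_quotient :: "('a, 'b) monoid_scheme \<Rightarrow> 'a set \<Rightarrow> 'a set monoid" where
  "rees_quotient M I =
     \<lparr>carrier = carrier M // rees_cong M I,
      mult = (\<lambda>A B. rees_cong M I `` {(SOME a. a \<in> A) \<otimes>\<^bsub>M\<^esub> (SOME b. b \<in> B)}),
      one = rees_cong M I `` {\<one>\<^bsub>M\<^esub>}\<rparr>"

datatype ('g, 'x) melt = One | Gel 'g | Xel 'x | Zero

fun melt_mult :: "('g, 'b) monoid_scheme \<Rightarrow> ('x \<Rightarrow> 'g \<Rightarrow> 'x) \<Rightarrow>
    ('g, 'x) melt \<Rightarrow> ('g, 'x) melt \<Rightarrow> ('g, 'x) melt" where
  "melt_mult G act One b = b"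
| "melt_mult G act a One = a"
| "melt_mult G act (Gel g) (Gel h) = Gel (g \<otimes>\<^bsub>G\<^esub> h)"
| "melt_mult G act (Xel x) (Gel g) = Xel (act x g)"
| "melt_mult G act (Gel g) (Xel x) = Zero"
| "melt_mult G act (Xel x) (Xel y) = Zero"
| "melt_mult G act Zero b = Zero"
| "melt_mult G act a Zero = Zero"

definition Mon :: "('g, 'b) monoid_scheme \<Rightarrow> 'x set \<Rightarrow> ('x \<Rightarrow> 'g \<Rightarrow> 'x) \<Rightarrow> ('g, 'x) melt monoid" where
  "Mon G X act =
     \<lparr>carrier = {One} \<union> Gel ` carrier G \<union> Xel ` X \<union> {Zero},
      mult = melt_mult G act, one = One\<rparr>"

end

theory Submission
  imports Defs
begin

(* - M is a monoid and I is an ideal: direct case analysis on the multiplication.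
   - I is a null semigroup (all products are 0), and every null semigroup is residually
     finite: separate c from everything else by the characteristic function of c.
   - M/I is residually finite: a homomorphism phi from G to a finite group N extends to
     a homomorphism from M onto N with a new identity and a zero adjoined, which is
     constant on I; every homomorphism constant on I factors through the Rees
     quotient.  Distinct elements of M/I are separated either via residual finiteness
     of G or already via the trivial group.
   - M is not residually finite: for a homomorphism h of M into a finite monoid, the
     map x |-> h x is compatible with the action, so its kernel is a G-invariant
     partition of X.  By primitivity it is trivial or discrete; since X is infinite and
     the target finite it is trivial, so h cannot separate two points of X. *)

lemma carrier_Mon: "carrier (Mon G X act) = {One} \<union> Gel ` carrier G \<union> Xel ` X \<union> {Zero}"
  and mult_Mon: "mult (Mon G X act) = melt_mult G act"
  and one_Mon: "one (Mon G X act) = One"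
  by (simp_all add: Mon_def)

lemma Mon_monoid:
  assumes G: "group G" and A: "right_action G X act"
  shows "monoid (Mon G X act)"
proof (rule monoidI, goal_cases)
  case (1 x y)
  then show ?case using A
    by (auto simp: carrier_Mon mult_Mon right_action_def
             dest: monoid.m_closed[OF group.is_monoid[OF G]])
next
  case (3 x y z)
  then show ?case using A
    by (auto simp: carrier_Mon mult_Mon right_action_def monoid.m_assoc[OF group.is_monoid[OF G]])
next
  case (5 x) then show ?case by (cases x) (simp_all add: Mon_def)
qed (simp_all add: Mon_def)

lemma Mon_ideal:
  assumes "right_action G X act"
  shows "monoid_ideal (Mon G X act) (Xel ` X \<union> {Zero})"
  using assms by (auto simp: monoid_ideal_def carrier_Mon mult_Mon right_action_def)

(* A null semigroup (all products equal one element z) is residually finite: for c \<noteq> z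
   the map sending c to 1 and everything else to 0 is a homomorphism into the
   two-element null semigroup. *)
lemma null_semigroup_residually_finite:
  assumes null: "\<And>a b. a \<in> carrier S \<Longrightarrow> b \<in> carrier S \<Longrightarrow> a \<otimes>\<^bsub>S\<^esub> b = z"
  shows "residually_finite_semigroup S"
  unfolding residually_finite_semigroup_def
proof (intro ballI impI)
  fix a b assume a: "a \<in> carrier S" and b: "b \<in> carrier S" and ab: "a \<noteq> b"
  obtain c where c: "c \<in> {a, b}" "c \<noteq> z" using ab by auto
  define N :: "nat monoid" where "N = \<lparr>carrier = {0, 1}, mult = (\<lambda>_ _. 0), one = 0\<rparr>"
  define h where "h = (\<lambda>s. if s = c then 1 else (0::nat))"
  have "semigroup_str N" by (simp add: N_def semigroup_str_def)
  moreover have "finite (carrier N)" by (simp add: N_def)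
  moreover have "h \<in> hom S N" using null c(2) by (auto simp: hom_def N_def h_def)
  moreover have "h a \<noteq> h b" using c ab by (auto simp: h_def)
  ultimately show "\<exists>(N :: nat monoid) h. semigroup_str N \<and> finite (carrier N) \<and>
      h \<in> hom S N \<and> h a \<noteq> h b" by blast
qed

lemma Mon_ideal_residually_finite:
  "residually_finite_semigroup (sub_semigroup (Mon G X act) (Xel ` X \<union> {Zero}))"
  by (rule null_semigroup_residually_finite[where z = Zero])
     (auto simp: sub_semigroup_def mult_Mon)

section \<open>Kernels of maps compatible with a primitive action\<close>

lemma right_action_inv_cancel:
  assumes G: "group G" and A: "right_action G X act" and x: "x \<in> X" and g: "g \<in> carrier G"
  shows "act (act x g) (inv\<^bsub>G\<^esub> g) = x" and "act (act x (inv\<^bsub>G\<^esub> g)) g = x"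
  using A x g G by (simp_all add: right_action_def group.r_inv group.l_inv)

definition kernel_rel :: "'x set \<Rightarrow> ('x \<Rightarrow> 'c) \<Rightarrow> ('x \<times> 'x) set" where
  "kernel_rel X k = {(u, v). u \<in> X \<and> v \<in> X \<and> k u = k v}"

lemma kernel_rel_equiv: "equiv X (kernel_rel X k)"
  by (auto simp: kernel_rel_def intro!: equivI refl_onI symI transI)

lemma kernel_rel_class: "u \<in> X \<Longrightarrow> kernel_rel X k `` {u} = {v \<in> X. k v = k u}"
  by (auto simp: kernel_rel_def)

lemma kernel_partition_invariant:
  assumes G: "group G" and A: "right_action G X act"
    and compat: "\<And>u v g. \<lbrakk>u \<in> X; v \<in> X; g \<in> carrier G; k u = k v\<rbrakk> \<Longrightarrow> k (act u g) = k (act v g)"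
  shows "invariant_partition G X act (X // kernel_rel X k)"
  unfolding invariant_partition_def
proof (intro conjI ballI)
  show "partition_on X (X // kernel_rel X k)"
    by (rule partition_on_quotient[OF kernel_rel_equiv])
next
  fix B g assume "B \<in> X // kernel_rel X k" and g: "g \<in> carrier G"
  then obtain u where u: "u \<in> X" and B: "B = {v \<in> X. k v = k u}"
    by (auto simp: quotient_def kernel_rel_class)
  have closed: "\<And>x h. x \<in> X \<Longrightarrow> h \<in> carrier G \<Longrightarrow> act x h \<in> X"
    using A by (simp add: right_action_def)
  have gi: "inv\<^bsub>G\<^esub> g \<in> carrier G" using G g by simp
  have "(\<lambda>x. act x g) ` B = {w \<in> X. k w = k (act u g)}"
  proof (intro equalityI subsetI)
    fix w assume "w \<in> (\<lambda>x. act x g) ` B"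
    then obtain v where "v \<in> X" "k v = k u" "w = act v g" using B by blast
    then show "w \<in> {w \<in> X. k w = k (act u g)}" using u g closed compat by blast
  next
    fix w assume w: "w \<in> {w \<in> X. k w = k (act u g)}"
    define z where "z = act w (inv\<^bsub>G\<^esub> g)"
    have "k z = k (act (act u g) (inv\<^bsub>G\<^esub> g))"
      unfolding z_def using w u g gi closed by (intro compat) auto
    then have "z \<in> B" using B u w gi closed right_action_inv_cancel[OF G A u g]
      by (simp add: z_def)
    moreover have "w = act z g" using right_action_inv_cancel[OF G A _ g] w by (simp add: z_def)
    ultimately show "w \<in> (\<lambda>x. act x g) ` B" by blast
  qed
  then show "(\<lambda>x. act x g) ` B \<in> X // kernel_rel X k"
    using closed[OF u g] by (auto simp: quotient_def kernel_rel_class)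
qed

lemma primitive_compatible_map_trivial:
  assumes G: "group G" and P: "primitive_action G X act"
    and compat: "\<And>u v g. \<lbrakk>u \<in> X; v \<in> X; g \<in> carrier G; k u = k v\<rbrakk> \<Longrightarrow> k (act u g) = k (act v g)"
  shows "(\<forall>u\<in>X. \<forall>v\<in>X. k u = k v) \<or> inj_on k X"
proof -
  have "right_action G X act" using P by (simp add: primitive_action_def)
  then have "invariant_partition G X act (X // kernel_rel X k)"
    by (rule kernel_partition_invariant[where k = k, OF G _ compat])
  then have "X // kernel_rel X k = {X} \<or> X // kernel_rel X k = (\<lambda>x. {x}) ` X"
    using P by (simp add: primitive_action_def)
  moreover have fibre: "{v \<in> X. k v = k u} \<in> X // kernel_rel X k" if "u \<in> X" for u
    using quotientI[OF that, of "kernel_rel X k"] kernel_rel_class[OF that, of k] by simp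
  ultimately show ?thesis
  proof (elim disjE)
    assume "X // kernel_rel X k = {X}"
    then have "{v \<in> X. k v = k u} = X" if "u \<in> X" for u using fibre[OF that] by simp
    then show ?thesis by blast
  next
    assume "X // kernel_rel X k = (\<lambda>x. {x}) ` X"
    then have singleton: "\<exists>z. {v \<in> X. k v = k u} = {z}" if "u \<in> X" for u
      using fibre[OF that] by auto
    have "u = v" if uv: "u \<in> X" "v \<in> X" "k u = k v" for u v
    proof -
      obtain z where z: "{w \<in> X. k w = k u} = {z}" using singleton[OF uv(1)] by blast
      have "u \<in> {z}" "v \<in> {z}" using uv unfolding z[symmetric] by auto
      then show ?thesis by simp
    qed
    then show ?thesis by (auto intro: inj_onI)
  qed
qed

(* Two distinct points of X cannot be separated in a finite monoid. *)
lemma Mon_not_residually_finite: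
  assumes G: "group G" and P: "primitive_action G X act" and inf: "infinite X"
  shows "\<not> residually_finite_monoid (Mon G X act)"
proof
  assume rf: "residually_finite_monoid (Mon G X act)"
  obtain x where x: "x \<in> X" using inf infinite_imp_nonempty by blast
  obtain y where y: "y \<in> X" and xy: "x \<noteq> y" using inf infinite_imp_nonempty[of "X - {x}"] by auto
  have "Xel x \<in> carrier (Mon G X act)" "Xel y \<in> carrier (Mon G X act)" "Xel x \<noteq> Xel y"
    using x y xy by (auto simp: carrier_Mon)
  from rf[unfolded residually_finite_monoid_def, rule_format, OF this]
  obtain N :: "nat monoid" and h where fin: "finite (carrier N)"
    and h: "h \<in> hom (Mon G X act) N" and sep: "h (Xel x) \<noteq> h (Xel y)"
    by blast
  define k where "k = (\<lambda>z. h (Xel z))"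
  have k_act: "k (act u g) = k u \<otimes>\<^bsub>N\<^esub> h (Gel g)" if "u \<in> X" "g \<in> carrier G" for u g
  proof -
    have "Xel u \<in> carrier (Mon G X act)" "Gel g \<in> carrier (Mon G X act)"
      using that by (simp_all add: carrier_Mon)
    then have "h (Xel u \<otimes>\<^bsub>Mon G X act\<^esub> Gel g) = h (Xel u) \<otimes>\<^bsub>N\<^esub> h (Gel g)"
      by (rule hom_mult[OF h])
    then show ?thesis unfolding k_def mult_Mon by simp
  qed
  have "(\<forall>u\<in>X. \<forall>v\<in>X. k u = k v) \<or> inj_on k X"
    by (rule primitive_compatible_map_trivial[OF G P]) (simp add: k_act)
  moreover have "\<not> inj_on k X"
  proof
    assume "inj_on k X"
    moreover have "k ` X \<subseteq> carrier N"
      using hom_in_carrier[OF h] by (auto simp: k_def carrier_Mon)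
    ultimately have "finite X" using fin by (rule inj_on_finite)
    then show False using inf by contradiction
  qed
  ultimately have "k x = k y" using x y by blast
  then show False using sep by (simp add: k_def)
qed

section \<open>Homomorphisms out of a Rees quotient\<close>

lemma rees_class:
  assumes "a \<in> carrier M"
  shows "rees_cong M I `` {a} = (if a \<in> I then I else {a})"
  using assms by (auto simp: rees_cong_def)

lemma rees_representative:
  assumes a: "a \<in> carrier M" and I: "I \<subseteq> carrier M"
    and const: "\<And>b c. b \<in> I \<Longrightarrow> c \<in> I \<Longrightarrow> f b = f c"
  shows "(SOME b. b \<in> rees_cong M I `` {a}) \<in> carrier M"
    and "f (SOME b. b \<in> rees_cong M I `` {a}) = f a"
proof -
  define s where "s = (SOME b. b \<in> rees_cong M I `` {a})"
  have "a \<in> rees_cong M I `` {a}" using a by (auto simp: rees_cong_def)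
  then have s_mem: "s \<in> (if a \<in> I then I else {a})"
    unfolding s_def rees_class[OF a, symmetric] by (rule someI)
  have "s \<in> carrier M" using s_mem a I by (auto split: if_splits)
  moreover have "f s = f a"
  proof (cases "a \<in> I")
    case True
    then have "s \<in> I" using s_mem by simp
    then show ?thesis using True by (rule const)
  next
    case False
    then show ?thesis using s_mem by simp
  qed
  ultimately show "(SOME b. b \<in> rees_cong M I `` {a}) \<in> carrier M"
    and "f (SOME b. b \<in> rees_cong M I `` {a}) = f a"
    by (simp_all add: s_def)
qed

lemma rees_quotient_hom:
  assumes M: "monoid M" and I: "I \<subseteq> carrier M" and f: "f \<in> hom M N"
    and const: "\<And>b c. b \<in> I \<Longrightarrow> c \<in> I \<Longrightarrow> f b = f c"
  shows "(\<lambda>C. f (SOME a. a \<in> C)) \<in> hom (rees_quotient M I) N"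
  unfolding hom_def
proof (intro CollectI conjI ballI funcsetI)
  note rep = rees_representative[OF _ I, of _ f, OF _ const]
  fix C assume "C \<in> carrier (rees_quotient M I)"
  then obtain a where a: "a \<in> carrier M" "C = rees_cong M I `` {a}"
    by (auto simp: rees_quotient_def quotient_def)
  then show "f (SOME b. b \<in> C) \<in> carrier N" using f rep by (auto simp: hom_def)
next
  note rep = rees_representative[OF _ I, of _ f, OF _ const]
  fix C D assume "C \<in> carrier (rees_quotient M I)" "D \<in> carrier (rees_quotient M I)"
  then obtain a b where a: "a \<in> carrier M" "C = rees_cong M I `` {a}"
    and b: "b \<in> carrier M" "D = rees_cong M I `` {b}"
    by (auto simp: rees_quotient_def quotient_def)
  define sa sb where "sa = (SOME x. x \<in> C)" and "sb = (SOME x. x \<in> D)"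
  have sa: "sa \<in> carrier M" and sb: "sb \<in> carrier M" using rep a b by (auto simp: sa_def sb_def)
  have "C \<otimes>\<^bsub>rees_quotient M I\<^esub> D = rees_cong M I `` {sa \<otimes>\<^bsub>M\<^esub> sb}"
    by (simp add: rees_quotient_def sa_def sb_def)
  then have "f (SOME x. x \<in> C \<otimes>\<^bsub>rees_quotient M I\<^esub> D) = f (sa \<otimes>\<^bsub>M\<^esub> sb)"
    using rep monoid.m_closed[OF M sa sb] by simp
  also have "\<dots> = f sa \<otimes>\<^bsub>N\<^esub> f sb" using f sa sb by (simp add: hom_def)
  finally show "f (SOME x. x \<in> C \<otimes>\<^bsub>rees_quotient M I\<^esub> D) =
      f (SOME x. x \<in> C) \<otimes>\<^bsub>N\<^esub> f (SOME x. x \<in> D)"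
    by (simp add: sa_def sb_def)
qed

(* The monoid N with a new identity 1 and a zero 0 adjoined; n \<in> N is encoded as n + 2. *)
definition adjoin_one_zero :: "nat monoid \<Rightarrow> nat monoid" where
  "adjoin_one_zero N = \<lparr>carrier = {0, 1} \<union> (\<lambda>n. n + 2) ` carrier N,
     mult = (\<lambda>a b. if a = 1 then b else if b = 1 then a else if a = 0 \<or> b = 0 then 0
                    else ((a - 2) \<otimes>\<^bsub>N\<^esub> (b - 2)) + 2),
     one = 1\<rparr>"

lemma adjoin_one_zero_monoid:
  assumes N: "monoid N"
  shows "monoid (adjoin_one_zero N)"
proof (rule monoidI, goal_cases)
  case (1 x y) then show ?case using N by (auto simp: adjoin_one_zero_def monoid.m_closed)
next
  case (3 x y z) then show ?case using N
    by (auto simp: adjoin_one_zero_def monoid.m_assoc monoid.m_closed)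
qed (auto simp: adjoin_one_zero_def)

definition extend_hom :: "('g \<Rightarrow> nat) \<Rightarrow> ('g, 'x) melt \<Rightarrow> nat" where
  "extend_hom \<phi> a = (case a of One \<Rightarrow> 1 | Gel g \<Rightarrow> \<phi> g + 2 | Xel _ \<Rightarrow> 0 | Zero \<Rightarrow> 0)"

lemma extend_hom_simps [simp]:
  "extend_hom \<phi> One = 1" "extend_hom \<phi> (Gel g) = \<phi> g + 2"
  "extend_hom \<phi> (Xel x) = 0" "extend_hom \<phi> Zero = 0"
  by (simp_all add: extend_hom_def)

(* Since g x = 0 and x y = 0, sending I to the new zero respects multiplication. *)
lemma extend_hom_hom:
  assumes phi: "\<phi> \<in> hom G N"
  shows "extend_hom \<phi> \<in> hom (Mon G X act) (adjoin_one_zero N)"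
  using phi by (auto simp: hom_def carrier_Mon mult_Mon adjoin_one_zero_def)

lemma trivial_group: "group \<lparr>carrier = {0::nat}, mult = (\<lambda>_ _. 0), one = 0\<rparr>"
  by (rule groupI) auto

(* Two elements of M not both in I are separated by extend_hom \<phi> for some homomorphism
   \<phi> of G into a finite group: by residual finiteness of G if both lie in G, and by the
   trivial homomorphism otherwise. *)
lemma Mon_separation:
  assumes rf: "residually_finite_group G"
    and a: "a \<in> carrier (Mon G X act)" and b: "b \<in> carrier (Mon G X act)"
    and ab: "a \<noteq> b" and notI: "\<not> (a \<in> Xel ` X \<union> {Zero} \<and> b \<in> Xel ` X \<union> {Zero})"
  shows "\<exists>(N::nat monoid) \<phi>. group N \<and> finite (carrier N) \<and> \<phi> \<in> hom G N \<and>
           extend_hom \<phi> a \<noteq> extend_hom \<phi> b"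
proof (cases "\<exists>g h. a = Gel g \<and> b = Gel h")
  case True
  then obtain g h where gh: "a = Gel g" "b = Gel h" by blast
  then have "g \<in> carrier G" "h \<in> carrier G" "g \<noteq> h" using a b ab by (auto simp: carrier_Mon)
  then show ?thesis using rf gh unfolding residually_finite_group_def by fastforce
next
  case False
  then have "extend_hom (\<lambda>_. 0) a \<noteq> extend_hom (\<lambda>_. 0) b"
    using a b ab notI by (auto simp: carrier_Mon)
  moreover have "(\<lambda>_. 0::nat) \<in> hom G \<lparr>carrier = {0::nat}, mult = (\<lambda>_ _. 0), one = 0\<rparr>"
    by (simp add: hom_def)
  ultimately show ?thesis using trivial_group by fastforce
qed

(* Distinct Rees classes have representatives not both in I; separate them in M
   by an extension homomorphism and factor it through M/I. *)
lemma Mon_rees_quotient_residually_finite: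
  assumes G: "group G" and rf: "residually_finite_group G" and A: "right_action G X act"
  shows "residually_finite_monoid (rees_quotient (Mon G X act) (Xel ` X \<union> {Zero}))"
  unfolding residually_finite_monoid_def
proof (intro ballI impI)
  let ?M = "Mon G X act" and ?I = "Xel ` X \<union> {Zero}"
  let ?Q = "rees_quotient ?M ?I"
  have I: "?I \<subseteq> carrier ?M" by (auto simp: carrier_Mon)
  fix C D assume "C \<in> carrier ?Q" "D \<in> carrier ?Q" and CD: "C \<noteq> D"
  then obtain a b where a: "a \<in> carrier ?M" "C = rees_cong ?M ?I `` {a}"
    and b: "b \<in> carrier ?M" "D = rees_cong ?M ?I `` {b}"
    by (auto simp: rees_quotient_def quotient_def)
  have "a \<noteq> b" "\<not> (a \<in> ?I \<and> b \<in> ?I)" using CD a b rees_class[OF a(1)] rees_class[OF b(1)] by auto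
  then obtain N :: "nat monoid" and \<phi> where N: "group N" "finite (carrier N)" "\<phi> \<in> hom G N"
    and sep: "extend_hom \<phi> a \<noteq> extend_hom \<phi> b"
    using Mon_separation[OF rf a(1) b(1)] by blast
  let ?f = "extend_hom \<phi>" and ?N = "adjoin_one_zero N"
  have const: "\<And>u v. u \<in> ?I \<Longrightarrow> v \<in> ?I \<Longrightarrow> ?f u = ?f v" by auto
  note rep = rees_representative[OF _ I, of _ ?f, OF _ const]
  have "monoid ?N" using N(1) by (simp add: adjoin_one_zero_monoid group.is_monoid)
  moreover have "finite (carrier ?N)" using N(2) by (simp add: adjoin_one_zero_def)
  moreover have "(\<lambda>C. ?f (SOME a. a \<in> C)) \<in> hom ?Q ?N"
    by (rule rees_quotient_hom[OF Mon_monoid[OF G A] I extend_hom_hom[OF N(3)] const])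
  moreover have "?f (SOME a. a \<in> \<one>\<^bsub>?Q\<^esub>) = \<one>\<^bsub>?N\<^esub>"
    using rep[of One] by (simp add: rees_quotient_def adjoin_one_zero_def carrier_Mon one_Mon)
  moreover have "?f (SOME a. a \<in> C) \<noteq> ?f (SOME a. a \<in> D)" using sep rep a b by simp
  ultimately show "\<exists>(N :: nat monoid) h. monoid N \<and> finite (carrier N) \<and>
      h \<in> hom ?Q N \<and> h \<one>\<^bsub>?Q\<^esub> = \<one>\<^bsub>N\<^esub> \<and> h C \<noteq> h D" by blast
qed

theorem mainTheorem12:
  fixes G :: "'g monoid" and X :: "'x set" and act :: "'x \<Rightarrow> 'g \<Rightarrow> 'x"
  assumes "group G"
    and "residually_finite_group G"
    and "primitive_action G X act"
    and "infinite X"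
  shows "monoid (Mon G X act)
    \<and> monoid_ideal (Mon G X act) (Xel ` X \<union> {Zero})
    \<and> residually_finite_semigroup (sub_semigroup (Mon G X act) (Xel ` X \<union> {Zero}))
    \<and> residually_finite_monoid (rees_quotient (Mon G X act) (Xel ` X \<union> {Zero}))
    \<and> \<not> residually_finite_monoid (Mon G X act)"
proof -
  have A: "right_action G X act" using assms(3) by (simp add: primitive_action_def)
  show ?thesis
    by (intro conjI Mon_monoid[OF assms(1) A] Mon_ideal[OF A] Mon_ideal_residually_finite
        Mon_rees_quotient_residually_finite[OF assms(1,2) A]
        Mon_not_residually_finite[OF assms(1,3,4)])
qed

end
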